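(* Assume $X_t>0$ for all $t\in\mathcal T$ and let $\alpha=\sum_tY_t/X_t$. Let $\delta_{\mathcal X}\in[0,1]$ and let $\hat F_{\mathcal X}\in\mathbb F(\boldsymbol X)$ be any strategy whose $c$-marginals satisfy, for all $c\in\mathcal C$ and $\boldsymbol u\in\mathbb R^T_{\ge0}$, $$\hat F_{\mathcal X,c}(\boldsymbol u)=1-\delta_{\mathcal X}+\delta_{\mathcal X}\min_{t\in\mathcal T}\min\Big\{\frac{\delta_{\mathcal X}}{2v_cX_t}u_t,1\Big\}.$$ Then in the weakest-link game, for every $F_{\mathcal Y}\in\mathbb F(\boldsymbol Y)$, $$\pi_{\mathcal X}(\hat F_{\mathcal X},F_{\mathcal Y})\ge\delta_{\mathcal X}\Big(1-\frac{\delta_{\mathcal X}}{2}\alpha\Big).$$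
   Context: Contests $\mathcal C=\{1,\dots,C\}$ with values $v_c>0$, $\sum_cv_c=1$; types $\mathcal T=\{1,\dots,T\}$; $\boldsymbol Y\in\mathbb R^T_{\ge0}$. $\mathbb F(\boldsymbol X)$ is the set of probability distributions $F$ on $\mathbb R^{CT}_{\ge0}$ (points $\mathbf x=(\boldsymbol x_c)_c$, $\boldsymbol x_c=(x_{c,t})_t$) with $\mathbb E_{\mathbf x\sim F}[\sum_cx_{c,t}]\le X_t$ for all $t$; similarly $\mathbb F(\boldsymbol Y)$. $c$-marginal: $F_c(\boldsymbol u)=\mathbb P_{\mathbf x\sim F}[x_{c,t}\le u_t\ \forall t]$. Weakest-link rule $W_{\mathrm{WL}}(\boldsymbol x,\boldsymbol y)=\mathbf 1\{x_t\ge y_t\ \forall t\}$; $\pi_{\mathcal X}(F_{\mathcal X},F_{\mathcal Y})=\mathbb E[\sum_cv_cW_{\mathrm{WL}}(\boldsymbol x_c,\boldsymbol y_c)]$ with independent $\mathbf x\sim F_{\mathcal X}$, $\mathbf y\sim F_{\mathcal Y}$. (A strategy with the displayed marginals: in contest $c$, with probability $1-\delta_{\mathcal X}$ allocate nothing; otherwise draw $U\sim\mathrm{Unif}[0,1]$ and allocate $x_{c,t}=\frac{2v_cX_t}{\delta_{\mathcal X}}U$ of every type $t$.) *)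

theory Defs
  imports "HOL-Probability.Probability"
begin

text \<open>Contests are indexed by a finite type 'c, resource types by a finite type 't.
A pure allocation is a point x :: real^'t^'c, with x$c$t the amount of type t in contest c.\<close>

definition strategies :: "('t::finite \<Rightarrow> real) \<Rightarrow> (real^'t^'c::finite) measure set" where
  "strategies B = {F. sets F = sets borel \<and> prob_space F \<and>
      (AE x in F. \<forall>c t. 0 \<le> x $ c $ t) \<and>
      (\<forall>t. (\<integral>\<^sup>+ x. ennreal (\<Sum>c\<in>UNIV. x $ c $ t) \<partial>F) \<le> ennreal (B t))}"

definition marginal_cdf :: "(real^'t::finite^'c::finite) measure \<Rightarrow> 'c \<Rightarrow> ('t \<Rightarrow> real) \<Rightarrow> real" where
  "marginal_cdf F c u = measure F {x \<in> space F. \<forall>t. x $ c $ t \<le> u t}"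

definition W_WL :: "real^'t::finite \<Rightarrow> real^'t \<Rightarrow> real" where
  "W_WL x y = (if \<forall>t. x $ t \<ge> y $ t then 1 else 0)"

definition payoff_X :: "('c::finite \<Rightarrow> real) \<Rightarrow> (real^'t::finite^'c) measure \<Rightarrow> (real^'t^'c) measure \<Rightarrow> real" where
  "payoff_X v FX FY = (\<integral>xy. (\<Sum>c\<in>UNIV. v c * W_WL (fst xy $ c) (snd xy $ c)) \<partial>(FX \<Otimes>\<^sub>M FY))"

end

theory Submission
  imports Defs
begin

(*
  Under the given marginals, the allocation to contest c is 0 with probability 1 - \<delta> and
  otherwise a uniform point of the segment from 0 to the corner (2 v c X t / \<delta>)_t.
  Against an allocation y it can only lose if that point lies below the fraction
  s = \<Sum>t. \<delta> max (y t) 0 / (2 v c X t) of the segment, an event of probability at most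
  1 - \<delta> + \<delta> s. Weighting by v c and summing over contests gives
  \<delta> - \<delta>^2 / 2 \<Sum>t. (\<Sum>c. max (y c t) 0) / X t, and averaging over an opponent whose expected
  total of type t is at most Y t gives the bound.
*)

lemma borel_measurable_vec_nth_nth [measurable]:
  "(\<lambda>x::real^'n::finite^'m::finite. x $ i $ j) \<in> borel_measurable borel"
  by (intro borel_measurable_continuous_onI continuous_on_component continuous_on_id)

lemma measure_ex_le_ray:
  fixes M :: "'a measure" and \<xi> :: "'t::finite \<Rightarrow> 'a \<Rightarrow> real" and w :: "'t \<Rightarrow> real"
  assumes "prob_space M"
    and [measurable]: "\<And>t. \<xi> t \<in> borel_measurable M"
    and w_pos: "\<And>t. 0 < w t"
    and cdf: "\<And>a. (\<forall>t. 0 \<le> a t) \<Longrightarrow>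
        measure M {x\<in>space M. \<forall>t. \<xi> t x \<le> a t} = 1 - \<delta> + \<delta> * (MIN t. min (w t * a t) 1)"
    and s: "0 \<le> s" "s \<le> 1"
  shows "measure M {x\<in>space M. \<exists>t. \<xi> t x \<le> s / w t} \<le> 1 - \<delta> + \<delta> * s"
proof -
  interpret prob_space M by fact
  have cdf_scaled: "measure M {x\<in>space M. \<forall>t. \<xi> t x \<le> \<sigma> t / w t} = 1 - \<delta> + \<delta> * (MIN t. min (\<sigma> t) 1)"
    if "\<forall>t. 0 \<le> \<sigma> t" for \<sigma>
  proof -
    have "w t * (\<sigma> t / w t) = \<sigma> t" for t
      using w_pos[of t] by simp
    then show ?thesis
      using cdf[of "\<lambda>t. \<sigma> t / w t"] that w_pos by (simp add: less_imp_le)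
  qed
  define C where "C = {x\<in>space M. \<forall>t. \<xi> t x \<le> s / w t}"
  define B where "B t = {x\<in>space M. \<forall>t'. \<xi> t' x \<le> (if t' = t then s else 1) / w t'}" for t
  have [measurable]: "C \<in> sets M" "B t \<in> sets M" for t
    unfolding B_def C_def by measurable
  have C: "measure M C = 1 - \<delta> + \<delta> * s"
    using cdf_scaled[of "\<lambda>_. s"] s by (simp add: C_def)
  have B: "measure M (B t) = 1 - \<delta> + \<delta> * s" for t
  proof -
    have "(MIN t'. min (if t' = t then s else 1) 1) = s"
      using s by (intro Min_eqI) auto
    then show ?thesis
      using cdf_scaled[of "\<lambda>t'. if t' = t then s else 1"] s by (simp add: B_def)
  qed
  \<comment> \<open>Only the cdf is known, so we argue with boxes: \<open>B t\<close> contains \<open>C\<close> and has the same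
    measure, hence adds only a null set, while the box with corner \<open>(1 / w t)\<^sub>t\<close> has full measure.\<close>
  have "AE x in M. x \<in> B t \<longrightarrow> x \<in> C" for t
  proof -
    have "s / w t' \<le> 1 / w t'" for t'
      using s w_pos[of t'] by (simp add: divide_right_mono)
    then have "C \<subseteq> B t"
      unfolding B_def C_def by (auto intro: order_trans)
    then have "measure M (B t - C) = 0"
      using B C by (simp add: finite_measure_Diff)
    then have "B t - C \<in> null_sets M"
      by (intro null_setsI) (auto simp: emeasure_eq_measure)
    then show ?thesis
      using AE_not_in by fastforce
  qed
  then have "AE x in M. \<forall>t. x \<in> B t \<longrightarrow> x \<in> C"
    unfolding AE_all_countable by (intro allI)
  moreover have "AE x in M. \<forall>t. \<xi> t x \<le> 1 / w t"
    using cdf_scaled[of "\<lambda>_. 1"] by (intro AE_I_eq_1) (auto simp: emeasure_eq_measure)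
  ultimately have "AE x in M. x \<in> {x\<in>space M. \<exists>t. \<xi> t x \<le> s / w t} \<longrightarrow> x \<in> C"
  proof eventually_elim
    case (elim x)
    show ?case
    proof
      assume "x \<in> {x\<in>space M. \<exists>t. \<xi> t x \<le> s / w t}"
      then obtain t where "x \<in> space M" "\<xi> t x \<le> s / w t"
        by blast
      with elim have "x \<in> B t"
        by (auto simp: B_def)
      with elim show "x \<in> C"
        by blast
    qed
  qed
  then have "measure M {x\<in>space M. \<exists>t. \<xi> t x \<le> s / w t} \<le> measure M C"
    by (rule finite_measure_mono_AE) measurable
  with C show ?thesis
    by simp
qed

lemma measure_all_ge_ray:
  fixes M :: "'a measure" and \<xi> :: "'t::finite \<Rightarrow> 'a \<Rightarrow> real" and w z :: "'t \<Rightarrow> real"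
  assumes "prob_space M"
    and [measurable]: "\<And>t. \<xi> t \<in> borel_measurable M"
    and w_pos: "\<And>t. 0 < w t"
    and cdf: "\<And>a. (\<forall>t. 0 \<le> a t) \<Longrightarrow>
        measure M {x\<in>space M. \<forall>t. \<xi> t x \<le> a t} = 1 - \<delta> + \<delta> * (MIN t. min (w t * a t) 1)"
    and "0 \<le> \<delta>"
  shows "\<delta> * (1 - (\<Sum>t\<in>UNIV. w t * max (z t) 0)) \<le> measure M {x\<in>space M. \<forall>t. z t \<le> \<xi> t x}"
proof -
  interpret prob_space M by fact
  define s where "s = (\<Sum>t\<in>UNIV. w t * max (z t) 0)"
  show ?thesis
  proof (cases "s < 1")
    case False
    then have "\<delta> * (1 - s) \<le> 0"
      using \<open>0 \<le> \<delta>\<close> by (simp add: mult_nonneg_nonpos)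
    then show ?thesis
      by (simp add: s_def order_trans[OF _ measure_nonneg])
  next
    case True
    have "0 \<le> s"
      using w_pos by (auto simp: s_def less_imp_le intro!: sum_nonneg)
    have "z t \<le> s / w t" for t
    proof -
      have "w t * max (z t) 0 \<le> s"
        unfolding s_def using w_pos by (intro member_le_sum) (auto simp: less_imp_le)
      moreover have "w t * z t \<le> w t * max (z t) 0"
        using w_pos[of t] by (intro mult_left_mono) auto
      ultimately have "w t * z t \<le> s"
        by linarith
      then show ?thesis
        using w_pos[of t] by (simp add: pos_le_divide_eq mult.commute)
    qed
    then have "space M - {x\<in>space M. \<forall>t. z t \<le> \<xi> t x} \<subseteq> {x\<in>space M. \<exists>t. \<xi> t x \<le> s / w t}"
      by (auto simp: not_le) (meson less_le_trans less_imp_le)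
    then have "measure M (space M - {x\<in>space M. \<forall>t. z t \<le> \<xi> t x})
        \<le> measure M {x\<in>space M. \<exists>t. \<xi> t x \<le> s / w t}"
      by (rule finite_measure_mono) measurable
    also have "\<dots> \<le> 1 - \<delta> + \<delta> * s"
      using measure_ex_le_ray[OF \<open>prob_space M\<close> _ w_pos cdf \<open>0 \<le> s\<close>] True by simp
    finally have "1 - measure M {x\<in>space M. \<forall>t. z t \<le> \<xi> t x} \<le> 1 - \<delta> + \<delta> * s"
      by (subst (asm) prob_compl) measurable
    then show ?thesis
      by (simp add: s_def algebra_simps)
  qed
qed

lemma payoff_X_eq_integral_win_prob:
  fixes v :: "'c::finite \<Rightarrow> real" and FX FY :: "(real^'t::finite^'c) measure"
  assumes "prob_space FX" "sets FX = sets borel" "prob_space FY" "sets FY = sets borel"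
  shows "integrable FY (\<lambda>y. \<Sum>c\<in>UNIV. v c * measure FX {x\<in>space FX. \<forall>t. y$c$t \<le> x$c$t})"
    and "payoff_X v FX FY = (\<integral>y. (\<Sum>c\<in>UNIV. v c * measure FX {x\<in>space FX. \<forall>t. y$c$t \<le> x$c$t}) \<partial>FY)"
proof -
  interpret FX: prob_space FX by fact
  interpret FY: prob_space FY by fact
  interpret pair_prob_space FX FY ..
  define f where "f x y = (\<Sum>c\<in>UNIV. v c * W_WL (x $ c) (y $ c))" for x y :: "real^'t^'c"
  have W_WL_indicator: "W_WL (x $ c) (y $ c) = indicator {x. \<forall>t. y$c$t \<le> x$c$t} x" for x y :: "real^'t^'c" and c
    by (simp add: W_WL_def indicator_def)
  have sets_prod: "sets (FX \<Otimes>\<^sub>M FY) = sets (borel \<Otimes>\<^sub>M borel)"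
    by (intro sets_pair_measure_cong assms(2,4))
  have "case_prod f \<in> borel_measurable (FX \<Otimes>\<^sub>M FY)"
    unfolding measurable_cong_sets[OF sets_prod refl] f_def W_WL_def by measurable
  moreover have "norm (case_prod f xy) \<le> (\<Sum>c\<in>UNIV. \<bar>v c\<bar>)" for xy
    unfolding f_def W_WL_def case_prod_beta by (rule order_trans[OF norm_sum sum_mono]) auto
  ultimately have f_int: "integrable (FX \<Otimes>\<^sub>M FY) (case_prod f)"
    by (intro P.integrable_const_bound[where B="\<Sum>c\<in>UNIV. \<bar>v c\<bar>"]) auto
  have inner: "(\<integral>x. f x y \<partial>FX) = (\<Sum>c\<in>UNIV. v c * measure FX {x\<in>space FX. \<forall>t. y$c$t \<le> x$c$t})" for y
  proof -
    have win_sets: "{x. \<forall>t. y$c$t \<le> x$c$t} \<in> sets FX" for c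
      unfolding assms(2) by measurable
    have "(\<integral>x. f x y \<partial>FX) = (\<Sum>c\<in>UNIV. \<integral>x. v c * indicator {x. \<forall>t. y$c$t \<le> x$c$t} x \<partial>FX)"
      unfolding f_def W_WL_indicator
      by (intro Bochner_Integration.integral_sum integrable_mult_right integrable_real_indicator win_sets)
        (simp add: FX.emeasure_eq_measure)
    moreover have "space FX = UNIV"
      using sets_eq_imp_space_eq[OF assms(2)] by simp
    ultimately show ?thesis
      using win_sets by simp
  qed
  show "integrable FY (\<lambda>y. \<Sum>c\<in>UNIV. v c * measure FX {x\<in>space FX. \<forall>t. y$c$t \<le> x$c$t})"
    using integrable_snd[OF f_int] by (simp add: inner)
  show "payoff_X v FX FY = (\<integral>y. (\<Sum>c\<in>UNIV. v c * measure FX {x\<in>space FX. \<forall>t. y$c$t \<le> x$c$t}) \<partial>FY)"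
  proof -
    have "payoff_X v FX FY = integral\<^sup>L (FX \<Otimes>\<^sub>M FY) (case_prod f)"
      by (simp add: payoff_X_def f_def case_prod_beta')
    also have "\<dots> = (\<integral>y. (\<integral>x. f x y \<partial>FX) \<partial>FY)"
      by (rule integral_snd[OF f_int, symmetric])
    finally show ?thesis
      by (simp only: inner)
  qed
qed

lemma strategies_integral_pos_part_le:
  fixes F :: "(real^'t::finite^'c::finite) measure"
  assumes F: "F \<in> strategies B" and "0 \<le> B t"
  shows "integrable F (\<lambda>y. \<Sum>c\<in>UNIV. max (y$c$t) 0)"
    and "(\<integral>y. (\<Sum>c\<in>UNIV. max (y$c$t) 0) \<partial>F) \<le> B t"
proof -
  have sets_F: "sets F = sets borel" and AE_nonneg: "AE y in F. \<forall>c t. 0 \<le> y$c$t"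
    and budget: "(\<integral>\<^sup>+ y. ennreal (\<Sum>c\<in>UNIV. y$c$t) \<partial>F) \<le> ennreal (B t)"
    using F by (auto simp: strategies_def)
  have meas: "(\<lambda>y. \<Sum>c\<in>UNIV. max (y$c$t) 0) \<in> borel_measurable F"
    unfolding measurable_cong_sets[OF sets_F refl] by measurable
  have "(\<integral>\<^sup>+ y. ennreal (\<Sum>c\<in>UNIV. max (y$c$t) 0) \<partial>F) = (\<integral>\<^sup>+ y. ennreal (\<Sum>c\<in>UNIV. y$c$t) \<partial>F)"
    using AE_nonneg by (intro nn_integral_cong_AE) auto
  with budget have nn_le: "(\<integral>\<^sup>+ y. ennreal (\<Sum>c\<in>UNIV. max (y$c$t) 0) \<partial>F) \<le> ennreal (B t)"
    by simp
  have nonneg: "AE y in F. 0 \<le> (\<Sum>c\<in>UNIV. max (y$c$t) 0)"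
    by (simp add: sum_nonneg)
  show int: "integrable F (\<lambda>y. \<Sum>c\<in>UNIV. max (y$c$t) 0)"
  proof (rule integrableI_nonneg[OF meas nonneg])
    show "(\<integral>\<^sup>+ y. ennreal (\<Sum>c\<in>UNIV. max (y$c$t) 0) \<partial>F) < \<infinity>"
      using nn_le by (simp add: le_less_trans)
  qed
  have "ennreal (\<integral>y. (\<Sum>c\<in>UNIV. max (y$c$t) 0) \<partial>F) \<le> ennreal (B t)"
    using nn_le by (subst nn_integral_eq_integral[OF int nonneg, symmetric])
  with \<open>0 \<le> B t\<close> show "(\<integral>y. (\<Sum>c\<in>UNIV. max (y$c$t) 0) \<partial>F) \<le> B t"
    by (simp add: ennreal_le_iff)
qed

lemma weighted_win_prob_ge:
  fixes v :: "'c::finite \<Rightarrow> real" and X :: "'t::finite \<Rightarrow> real" and FX :: "(real^'t^'c) measure"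
    and y :: "real^'t^'c"
  assumes v_pos: "\<forall>c. v c > 0" and v_sum: "(\<Sum>c\<in>UNIV. v c) = 1"
    and X_pos: "\<forall>t. X t > 0" and "0 < \<delta>"
    and "prob_space FX" and sets_FX: "sets FX = sets borel"
    and FX_marg: "\<forall>c u. (\<forall>t. 0 \<le> u t) \<longrightarrow>
        marginal_cdf FX c u = 1 - \<delta> + \<delta> * (MIN t. min (\<delta> / (2 * v c * X t) * u t) 1)"
  shows "\<delta> - \<delta>\<^sup>2 / 2 * (\<Sum>t\<in>UNIV. (\<Sum>c\<in>UNIV. max (y$c$t) 0) / X t)
      \<le> (\<Sum>c\<in>UNIV. v c * measure FX {x\<in>space FX. \<forall>t. y$c$t \<le> x$c$t})"
proof -
  have contest: "v c * \<delta> - \<delta>\<^sup>2 / 2 * (\<Sum>t\<in>UNIV. max (y$c$t) 0 / X t)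
      \<le> v c * measure FX {x\<in>space FX. \<forall>t. y$c$t \<le> x$c$t}" for c
  proof -
    have "\<delta> * (1 - (\<Sum>t\<in>UNIV. \<delta> / (2 * v c * X t) * max (y$c$t) 0))
        \<le> measure FX {x\<in>space FX. \<forall>t. y$c$t \<le> x$c$t}"
      using v_pos X_pos \<open>0 < \<delta>\<close> FX_marg
      by (intro measure_all_ge_ray[OF \<open>prob_space FX\<close>])
        (auto simp: measurable_cong_sets[OF sets_FX refl] marginal_cdf_def)
    then have "v c * (\<delta> * (1 - (\<Sum>t\<in>UNIV. \<delta> / (2 * v c * X t) * max (y$c$t) 0)))
        \<le> v c * measure FX {x\<in>space FX. \<forall>t. y$c$t \<le> x$c$t}"
      using v_pos by (simp add: less_imp_le)
    moreover have "v c * (\<delta> * (1 - (\<Sum>t\<in>UNIV. \<delta> / (2 * v c * X t) * max (y$c$t) 0)))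
        = v c * \<delta> - \<delta>\<^sup>2 / 2 * (\<Sum>t\<in>UNIV. max (y$c$t) 0 / X t)"
      using v_pos[rule_format, of c]
      by (simp add: algebra_simps sum_distrib_left power2_eq_square)
    ultimately show ?thesis
      by simp
  qed
  have "(\<Sum>t\<in>UNIV. (\<Sum>c\<in>UNIV. max (y$c$t) 0) / X t) = (\<Sum>c\<in>UNIV. \<Sum>t\<in>UNIV. max (y$c$t) 0 / X t)"
    by (subst sum.swap) (simp add: sum_divide_distrib)
  then have "\<delta> - \<delta>\<^sup>2 / 2 * (\<Sum>t\<in>UNIV. (\<Sum>c\<in>UNIV. max (y$c$t) 0) / X t)
      = (\<Sum>c\<in>UNIV. v c * \<delta> - \<delta>\<^sup>2 / 2 * (\<Sum>t\<in>UNIV. max (y$c$t) 0 / X t))"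
    using v_sum by (simp add: sum_subtractf sum_distrib_left flip: sum_distrib_right)
  also have "\<dots> \<le> (\<Sum>c\<in>UNIV. v c * measure FX {x\<in>space FX. \<forall>t. y$c$t \<le> x$c$t})"
    by (rule sum_mono[OF contest])
  finally show ?thesis .
qed

lemma strategies_integral_penalty_ge:
  fixes F :: "(real^'t::finite^'c::finite) measure" and X :: "'t \<Rightarrow> real" and \<delta> :: real
  assumes F: "F \<in> strategies Y" and Y_nonneg: "\<forall>t. Y t \<ge> 0" and X_pos: "\<forall>t. X t > 0"
  defines "penalty \<equiv> \<lambda>y. \<delta> - \<delta>\<^sup>2 / 2 * (\<Sum>t\<in>UNIV. (\<Sum>c\<in>UNIV. max (y$c$t) 0) / X t)"
  shows "integrable F penalty"
    and "\<delta> * (1 - \<delta> / 2 * (\<Sum>t\<in>UNIV. Y t / X t)) \<le> (\<integral>y. penalty y \<partial>F)"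
proof -
  interpret prob_space F
    using F by (simp add: strategies_def)
  define g where "g t y = (\<Sum>c\<in>UNIV. max (y$c$t) 0)" for t and y :: "real^'t^'c"
  have g: "integrable F (g t)" "integral\<^sup>L F (g t) \<le> Y t" for t
    unfolding g_def using strategies_integral_pos_part_le[OF F] Y_nonneg by auto
  have penalty_g: "penalty = (\<lambda>y. \<delta> - \<delta>\<^sup>2 / 2 * (\<Sum>t\<in>UNIV. g t y / X t))"
    by (simp add: penalty_def g_def)
  show "integrable F penalty"
    unfolding penalty_g using g(1) by simp
  have "(\<Sum>t\<in>UNIV. integral\<^sup>L F (g t) / X t) \<le> (\<Sum>t\<in>UNIV. Y t / X t)"
    using g(2) X_pos by (intro sum_mono divide_right_mono) (auto simp: less_imp_le)
  then have "\<delta>\<^sup>2 / 2 * (\<Sum>t\<in>UNIV. integral\<^sup>L F (g t) / X t) \<le> \<delta>\<^sup>2 / 2 * (\<Sum>t\<in>UNIV. Y t / X t)"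
    by (intro mult_left_mono) auto
  then have "\<delta> * (1 - \<delta> / 2 * (\<Sum>t\<in>UNIV. Y t / X t)) \<le> \<delta> - \<delta>\<^sup>2 / 2 * (\<Sum>t\<in>UNIV. integral\<^sup>L F (g t) / X t)"
    by (simp add: power2_eq_square algebra_simps)
  also have "\<dots> = (\<integral>y. penalty y \<partial>F)"
    unfolding penalty_g using g(1) by (simp add: prob_space)
  finally show "\<delta> * (1 - \<delta> / 2 * (\<Sum>t\<in>UNIV. Y t / X t)) \<le> (\<integral>y. penalty y \<partial>F)" .
qed

theorem lemma5:
  fixes v :: "'c::finite \<Rightarrow> real"
    and X Y :: "'t::finite \<Rightarrow> real"
    and \<delta> :: real
    and FX :: "(real^'t^'c) measure"
  assumes v_pos: "\<forall>c. v c > 0"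
    and v_sum: "(\<Sum>c\<in>UNIV. v c) = 1"
    and X_pos: "\<forall>t. X t > 0"
    and Y_nonneg: "\<forall>t. Y t \<ge> 0"
    and delta: "0 \<le> \<delta>" "\<delta> \<le> 1"
    and FX_strat: "FX \<in> strategies X"
    and FX_marg: "\<forall>c u. (\<forall>t. 0 \<le> u t) \<longrightarrow>
        marginal_cdf FX c u = 1 - \<delta> + \<delta> * (MIN t. min (\<delta> / (2 * v c * X t) * u t) 1)"
  shows "\<forall>FY \<in> strategies Y.
     payoff_X v FX FY \<ge> \<delta> * (1 - \<delta> / 2 * (\<Sum>t\<in>UNIV. Y t / X t))"
proof
  fix FY :: "(real^'t^'c) measure"
  assume FY: "FY \<in> strategies Y"
  have spaces: "prob_space FX" "sets FX = sets borel" "prob_space FY" "sets FY = sets borel"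
    using FX_strat FY by (auto simp: strategies_def)
  note payoff = payoff_X_eq_integral_win_prob[OF spaces, of v]
  note penalty = strategies_integral_penalty_ge[OF FY Y_nonneg X_pos, of \<delta>]
  show "payoff_X v FX FY \<ge> \<delta> * (1 - \<delta> / 2 * (\<Sum>t\<in>UNIV. Y t / X t))"
  proof (cases "\<delta> = 0")
    case True
    have "0 \<le> payoff_X v FX FY"
      unfolding payoff(2) using v_pos
      by (intro integral_nonneg_AE AE_I2 sum_nonneg mult_nonneg_nonneg) (auto simp: less_imp_le)
    with True show ?thesis
      by simp
  next
    case False
    with delta(1) have "0 < \<delta>"
      by simp
    note win = weighted_win_prob_ge[OF v_pos v_sum X_pos this spaces(1,2) FX_marg]
    show ?thesis
      unfolding payoff(2) using penalty(2)
      by (rule order_trans) (intro integral_mono penalty(1) payoff(1) win)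
  qed
qed

end
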